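(* Let $\Omega\subset\mathbb{R}^2$ be open, $\lambda>0$, and let $u\in L^2(\Omega)$ satisfy $-\Delta u=\lambda u$ in $\Omega$. Let $\mathbf{x}_0\in\Omega$, $h>0$, and let $\mathbf{e}^-,\mathbf{e}^+$ be unit vectors with angle $\alpha\pi$ from $\mathbf{e}^-$ to $\mathbf{e}^+$, where $\alpha\in(0,2)$ is irrational; put $\Gamma^\pm=\{\mathbf{x}_0+t\mathbf{e}^\pm:0\le t\le h\}\subset\Omega$. Suppose $\Gamma^+$ is a singular line of $u$ ($\partial_\nu u=0$ on $\Gamma^+$) and $\Gamma^-$ is a generalized singular line of $u$ with constant parameter $\eta_1\equiv C_1$. Then $\mathrm{Vani}(u;\mathbf{x}_0)=0$ if $u(\mathbf{x}_0)\neq0$, and $\mathrm{Vani}(u;\mathbf{x}_0)=+\infty$ if $u(\mathbf{x}_0)=0$.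
   Context: No boundary condition is imposed on $\partial\Omega$; $u$ is real-analytic in $\Omega$. $\nu$ denotes a unit normal to the segment in question. A generalized singular line with parameter $\eta$ (not identically zero; here a nonzero complex constant) is a segment on which $\partial_\nu u+\eta u=0$. $\mathrm{Vani}(u;\mathbf{x}_0)$ is the smallest degree of a nonzero homogeneous term in the Taylor expansion of $u$ at $\mathbf{x}_0$ ($+\infty$ if all vanish). *)

theory Defs
  imports "HOL-Analysis.Analysis" "HOL-Library.Extended_Nat"
begin

definition pd1 :: "(real \<times> real \<Rightarrow> complex) \<Rightarrow> real \<times> real \<Rightarrow> complex" where
  "pd1 f x = vector_derivative (\<lambda>t. f (t, snd x)) (at (fst x))"

definition pd2 :: "(real \<times> real \<Rightarrow> complex) \<Rightarrow> real \<times> real \<Rightarrow> complex" where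
  "pd2 f x = vector_derivative (\<lambda>t. f (fst x, t)) (at (snd x))"

definition pdm :: "nat \<Rightarrow> nat \<Rightarrow> (real \<times> real \<Rightarrow> complex) \<Rightarrow> real \<times> real \<Rightarrow> complex" where
  "pdm j k f = (pd1 ^^ j) ((pd2 ^^ k) f)"

definition smooth_on :: "(real \<times> real) set \<Rightarrow> (real \<times> real \<Rightarrow> complex) \<Rightarrow> bool" where
  "smooth_on S f \<longleftrightarrow> (\<forall>j k. pdm j k f differentiable_on S)"

definition real_analytic_on :: "(real \<times> real) set \<Rightarrow> (real \<times> real \<Rightarrow> complex) \<Rightarrow> bool" where
  "real_analytic_on S f \<longleftrightarrow> smooth_on S f \<and>
     (\<forall>x\<in>S. \<exists>r>0. \<forall>y\<in>ball x r.
        (\<lambda>N. \<Sum>j\<le>N. pdm j (N - j) f x / of_nat (fact j * fact (N - j))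
               * of_real ((fst y - fst x) ^ j * (snd y - snd x) ^ (N - j))) sums f y)"

text \<open>Homogeneous Taylor term of degree N of f at x0 is nonzero (as a polynomial),
  i.e. some of its coefficients is nonzero.\<close>
definition hom_term_nonzero :: "(real \<times> real \<Rightarrow> complex) \<Rightarrow> real \<times> real \<Rightarrow> nat \<Rightarrow> bool" where
  "hom_term_nonzero f x0 N \<longleftrightarrow> (\<exists>j\<le>N. pdm j (N - j) f x0 / of_nat (fact j * fact (N - j)) \<noteq> 0)"

definition Vani :: "(real \<times> real \<Rightarrow> complex) \<Rightarrow> real \<times> real \<Rightarrow> enat" where
  "Vani f x0 = (if \<exists>N. hom_term_nonzero f x0 N
                then enat (LEAST N. hom_term_nonzero f x0 N) else \<infinity>)"

definition laplacian :: "(real \<times> real \<Rightarrow> complex) \<Rightarrow> real \<times> real \<Rightarrow> complex" where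
  "laplacian f x = pd1 (pd1 f) x + pd2 (pd2 f) x"

definition dir_deriv :: "(real \<times> real \<Rightarrow> complex) \<Rightarrow> real \<times> real \<Rightarrow> real \<times> real \<Rightarrow> complex" where
  "dir_deriv f v x = of_real (fst v) * pd1 f x + of_real (snd v) * pd2 f x"

definition unitv :: "real \<Rightarrow> real \<times> real" where
  "unitv \<theta> = (cos \<theta>, sin \<theta>)"

definition normalv :: "real \<Rightarrow> real \<times> real" where
  "normalv \<theta> = (- sin \<theta>, cos \<theta>)"

definition segment_pt :: "real \<times> real \<Rightarrow> real \<Rightarrow> real \<Rightarrow> real \<times> real" where
  "segment_pt x0 \<theta> t = x0 + t *\<^sub>R unitv \<theta>"

end

theory Submission
  imports Defs
begin

text \<open>
  Write \<open>c i j\<close> for the partial derivative \<open>\<partial>\<^sub>1\<^sup>i \<partial>\<^sub>2\<^sup>j u\<close> at \<open>x0\<close>. Since the mixed partial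
  derivatives of the smooth function \<open>u\<close> commute, the Helmholtz equation and the two boundary
  conditions may be differentiated arbitrarily often. This gives the recurrence
  \<open>c (i + 2) j + c i (j + 2) + lam * c i j = 0\<close>, and on each segment all derivatives along the
  segment of \<open>\<partial>\<^sub>\<nu>u + C u\<close> vanish at \<open>x0\<close>. If the coefficients vanish below degree \<open>N\<close>, the
  recurrence makes the degree \<open>N\<close> part harmonic, \<open>c (N - j) j = A \<i>\<^sup>j + B (-\<i>)\<^sup>j\<close>, and the
  boundary relation of order \<open>N - 1\<close> on the segment at angle \<open>\<phi>\<close> reads
  \<open>A * cis (N * \<phi>) = B * cis (- N * \<phi>)\<close>. For two angles differing by \<open>\<alpha>\<pi>\<close> with \<open>\<alpha>\<close> irrational this forces
  \<open>A = B = 0\<close>, so by induction on the degree all coefficients vanish as soon as \<open>u x0 = 0\<close>.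
\<close>

section \<open>Mixed partial derivatives commute\<close>

lemma norm_increment_le_vector_derivative_bound:
  fixes f :: "real \<Rightarrow> 'a::real_normed_vector"
  assumes "\<And>s. s \<in> closed_segment a b \<Longrightarrow> (f has_vector_derivative f' s) (at s)"
    and "\<And>s. s \<in> closed_segment a b \<Longrightarrow> norm (f' s) \<le> B"
  shows "norm (f b - f a) \<le> B * \<bar>b - a\<bar>"
  using differentiable_bound[of "closed_segment a b" f "\<lambda>s h. h *\<^sub>R f' s" B b a] assms
  by (auto simp: has_vector_derivative_def onorm_scaleR_left onorm_id intro: has_derivative_at_withinI)

lemma norm_vector_derivative_le_of_increment_bound:
  fixes f :: "real \<Rightarrow> 'a::real_normed_vector"
  assumes f': "(f has_vector_derivative f') (at a)"
    and bound: "eventually (\<lambda>s. norm (f (a + s) - f a - s *\<^sub>R w) \<le> C * \<bar>s\<bar>) (at 0)"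
  shows "norm (f' - w) \<le> C"
proof (rule tendsto_le[OF trivial_limit_at])
  let ?rem = "\<lambda>s. norm (f (a + s) - f a - s *\<^sub>R f') / \<bar>s\<bar>"
  have "(?rem \<longlongrightarrow> 0) (at 0)"
    using f' by (simp add: has_vector_derivative_def has_derivative_at)
  then show "((\<lambda>s. ?rem s + C) \<longlongrightarrow> C) (at 0)"
    using tendsto_add[OF _ tendsto_const, of ?rem 0 _ C] by simp
  show "((\<lambda>s. norm (f' - w)) \<longlongrightarrow> norm (f' - w)) (at 0)"
    by (rule tendsto_const)
  show "eventually (\<lambda>s. norm (f' - w) \<le> ?rem s + C) (at 0)"
    using bound eventually_neq_at_within[of 0 0 UNIV]
  proof eventually_elim
    case (elim s)
    have "s *\<^sub>R (f' - w) = (f (a + s) - f a - s *\<^sub>R w) - (f (a + s) - f a - s *\<^sub>R f')"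
      by (simp add: algebra_simps)
    then have "\<bar>s\<bar> * norm (f' - w)
        \<le> norm (f (a + s) - f a - s *\<^sub>R w) + norm (f (a + s) - f a - s *\<^sub>R f')"
      by (metis norm_scaleR real_norm_def norm_triangle_ineq4)
    also have "\<dots> \<le> C * \<bar>s\<bar> + norm (f (a + s) - f a - s *\<^sub>R f')"
      using elim(1) by simp
    finally show ?case
      using elim(2) by (simp add: field_simps)
  qed
qed

lemma mixed_second_difference_bound:
  fixes G G2 H :: "real \<times> real \<Rightarrow> 'a::real_normed_vector"
  assumes G2: "\<And>\<sigma> \<tau>. \<sigma> \<in> closed_segment a a' \<Longrightarrow> \<tau> \<in> closed_segment b b' \<Longrightarrow>
        ((\<lambda>t. G (\<sigma>, t)) has_vector_derivative G2 (\<sigma>, \<tau>)) (at \<tau>)"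
    and H: "\<And>\<sigma> \<tau>. \<sigma> \<in> closed_segment a a' \<Longrightarrow> \<tau> \<in> closed_segment b b' \<Longrightarrow>
        ((\<lambda>s. G2 (s, \<tau>)) has_vector_derivative H (\<sigma>, \<tau>)) (at \<sigma>)"
    and bound: "\<And>\<sigma> \<tau>. \<sigma> \<in> closed_segment a a' \<Longrightarrow> \<tau> \<in> closed_segment b b' \<Longrightarrow>
        norm (H (\<sigma>, \<tau>) - L) \<le> \<epsilon>"
  shows "norm (G (a', b') - G (a, b') - (G (a', b) - G (a, b)) - ((a' - a) * (b' - b)) *\<^sub>R L)
    \<le> \<epsilon> * \<bar>a' - a\<bar> * \<bar>b' - b\<bar>"
proof -
  have G2_increment: "norm (G2 (a', \<tau>) - G2 (a, \<tau>) - (a' - a) *\<^sub>R L) \<le> \<epsilon> * \<bar>a' - a\<bar>"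
    if \<tau>: "\<tau> \<in> closed_segment b b'" for \<tau>
  proof -
    have "((\<lambda>s. G2 (s, \<tau>) - s *\<^sub>R L) has_vector_derivative H (\<sigma>, \<tau>) - L) (at \<sigma>)"
      if "\<sigma> \<in> closed_segment a a'" for \<sigma>
      using H[OF that \<tau>] by (auto intro!: derivative_eq_intros)
    from norm_increment_le_vector_derivative_bound[OF this bound[OF _ \<tau>]]
    show ?thesis by (simp add: algebra_simps)
  qed
  have "((\<lambda>t. G (a', t) - G (a, t) - (t * (a' - a)) *\<^sub>R L) has_vector_derivative
      G2 (a', \<tau>) - G2 (a, \<tau>) - (a' - a) *\<^sub>R L) (at \<tau>)" if "\<tau> \<in> closed_segment b b'" for \<tau>
    using G2[OF _ that] by (auto intro!: derivative_eq_intros)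
  from norm_increment_le_vector_derivative_bound[OF this G2_increment]
  have "norm ((G (a', b') - G (a, b') - (b' * (a' - a)) *\<^sub>R L) - (G (a', b) - G (a, b) - (b * (a' - a)) *\<^sub>R L))
      \<le> \<epsilon> * \<bar>a' - a\<bar> * \<bar>b' - b\<bar>"
    by simp
  then show ?thesis
    by (simp add: algebra_simps)
qed

lemma square_neighbourhood:
  fixes H :: "real \<times> real \<Rightarrow> 'a::real_normed_vector"
  assumes "open S" "(a, b) \<in> S" "isCont H (a, b)" "\<epsilon> > 0"
  obtains d where "d > 0"
    "\<And>\<sigma> \<tau>. \<bar>\<sigma> - a\<bar> < d \<Longrightarrow> \<bar>\<tau> - b\<bar> < d \<Longrightarrow> (\<sigma>, \<tau>) \<in> S \<and> norm (H (\<sigma>, \<tau>) - H (a, b)) \<le> \<epsilon>"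
proof -
  obtain d1 where d1: "d1 > 0" "ball (a, b) d1 \<subseteq> S"
    using assms(1,2) open_contains_ball by blast
  obtain d2 where d2: "d2 > 0" "\<And>y. dist y (a, b) < d2 \<Longrightarrow> dist (H y) (H (a, b)) < \<epsilon>"
    using assms(3,4) unfolding continuous_at_eps_delta by blast
  show ?thesis
  proof (rule that[of "min d1 d2 / 2"])
    fix \<sigma> \<tau> assume "\<bar>\<sigma> - a\<bar> < min d1 d2 / 2" "\<bar>\<tau> - b\<bar> < min d1 d2 / 2"
    then have "dist (\<sigma>, \<tau>) (a, b) < min d1 d2"
      using norm_Pair_le[of "\<sigma> - a" "\<tau> - b"] by (simp add: dist_norm)
    then show "(\<sigma>, \<tau>) \<in> S \<and> norm (H (\<sigma>, \<tau>) - H (a, b)) \<le> \<epsilon>"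
      using d1(2) d2(2)[of "(\<sigma>, \<tau>)"] by (auto simp: dist_commute dist_norm)
  qed (use d1 d2 in simp)
qed

lemma mixed_partials_commute:
  fixes G G1 G2 H :: "real \<times> real \<Rightarrow> 'a::real_normed_vector"
  assumes "open S" "(a, b) \<in> S"
    and G1: "\<And>y. y \<in> S \<Longrightarrow> ((\<lambda>s. G (s, snd y)) has_vector_derivative G1 y) (at (fst y))"
    and G2: "\<And>y. y \<in> S \<Longrightarrow> ((\<lambda>t. G (fst y, t)) has_vector_derivative G2 y) (at (snd y))"
    and H: "\<And>y. y \<in> S \<Longrightarrow> ((\<lambda>s. G2 (s, snd y)) has_vector_derivative H y) (at (fst y))"
    and "isCont H (a, b)"
  shows "((\<lambda>t. G1 (a, t)) has_vector_derivative H (a, b)) (at b)"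
proof -
  have in_segment: "\<bar>\<sigma> - c\<bar> \<le> \<bar>c' - c\<bar>" if "\<sigma> \<in> closed_segment c c'" for \<sigma> c c' :: real
    using dist_in_closed_segment[OF that] by (simp add: dist_real_def abs_minus_commute)
  (* Let s \<rightarrow> 0 in the second difference estimate on the rectangle [a, a + s] \<times> [b, t]. *)
  have "\<exists>d>0. \<forall>t. \<bar>t - b\<bar> < d \<longrightarrow> norm (G1 (a, t) - G1 (a, b) - (t - b) *\<^sub>R H (a, b)) \<le> \<epsilon> * \<bar>t - b\<bar>"
    if "\<epsilon> > 0" for \<epsilon>
  proof -
    obtain d where "d > 0" and near: "\<And>\<sigma> \<tau>. \<bar>\<sigma> - a\<bar> < d \<Longrightarrow> \<bar>\<tau> - b\<bar> < d \<Longrightarrow>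
        (\<sigma>, \<tau>) \<in> S \<and> norm (H (\<sigma>, \<tau>) - H (a, b)) \<le> \<epsilon>"
      using square_neighbourhood[OF assms(1,2,6) \<open>\<epsilon> > 0\<close>] by blast
    show ?thesis
    proof (intro exI[of _ d] conjI allI impI)
      fix t assume t: "\<bar>t - b\<bar> < d"
      have "((\<lambda>s. G (s, t) - G (s, b)) has_vector_derivative G1 (a, t) - G1 (a, b)) (at a)"
        using G1[of "(a, t)"] G1[of "(a, b)"] near[of a t] near[of a b] t \<open>d > 0\<close>
        by (auto intro: has_vector_derivative_diff)
      moreover have "\<forall>\<^sub>F s in at 0. \<bar>s\<bar> < d"
        unfolding eventually_at using \<open>d > 0\<close> by (intro exI[of _ d]) auto
      then have "\<forall>\<^sub>F s in at 0. norm (G (a + s, t) - G (a + s, b) - (G (a, t) - G (a, b))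
          - s *\<^sub>R ((t - b) *\<^sub>R H (a, b))) \<le> (\<epsilon> * \<bar>t - b\<bar>) * \<bar>s\<bar>"
      proof eventually_elim
        case (elim s)
        have rectangle: "(\<sigma>, \<tau>) \<in> S \<and> norm (H (\<sigma>, \<tau>) - H (a, b)) \<le> \<epsilon>"
          if "\<sigma> \<in> closed_segment a (a + s)" "\<tau> \<in> closed_segment b t" for \<sigma> \<tau>
          using in_segment[OF that(1)] in_segment[OF that(2)] elim t by (intro near) auto
        show ?case
          using mixed_second_difference_bound[of a "a + s" b t G G2 H "H (a, b)" \<epsilon>] G2 H rectangle
          by (auto simp: algebra_simps)
      qed
      ultimately show "norm (G1 (a, t) - G1 (a, b) - (t - b) *\<^sub>R H (a, b)) \<le> \<epsilon> * \<bar>t - b\<bar>"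
        by (rule norm_vector_derivative_le_of_increment_bound)
    qed (rule \<open>d > 0\<close>)
  qed
  then show ?thesis
    unfolding has_vector_derivative_def has_derivative_at_alt
    by (simp add: bounded_linear_scaleR_left)
qed

lemma has_vector_derivative_along_line:
  assumes "(f has_derivative D) (at (x0 + t *\<^sub>R e))"
  shows "((\<lambda>s. f (x0 + s *\<^sub>R e)) has_vector_derivative D e) (at t)"
proof -
  have "((\<lambda>s. x0 + s *\<^sub>R e) has_derivative (\<lambda>s. s *\<^sub>R e)) (at t)"
    by (auto intro!: derivative_eq_intros)
  from diff_chain_at[OF this assms] show ?thesis
    by (simp add: has_vector_derivative_def o_def linear_scale[OF has_derivative_linear[OF assms]])
qed

lemma pd1_has_derivative:
  assumes "(f has_derivative D) (at y)"
  shows "((\<lambda>t. f (t, snd y)) has_vector_derivative D (1, 0)) (at (fst y))"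
  using has_vector_derivative_along_line[of f D "(0, snd y)" "fst y" "(1, 0)"] assms by simp

lemma pd2_has_derivative:
  assumes "(f has_derivative D) (at y)"
  shows "((\<lambda>t. f (fst y, t)) has_vector_derivative D (0, 1)) (at (snd y))"
  using has_vector_derivative_along_line[of f D "(fst y, 0)" "snd y" "(0, 1)"] assms by simp

lemma pd1_has_vector_derivative:
  assumes "f differentiable (at y)"
  shows "((\<lambda>t. f (t, snd y)) has_vector_derivative pd1 f y) (at (fst y))"
proof -
  obtain D where D: "(f has_derivative D) (at y)"
    using assms differentiable_def by blast
  show ?thesis
    using pd1_has_derivative[OF D] unfolding pd1_def by (simp add: vector_derivative_at)
qed

lemma pd2_has_vector_derivative:
  assumes "f differentiable (at y)"
  shows "((\<lambda>t. f (fst y, t)) has_vector_derivative pd2 f y) (at (snd y))"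
proof -
  obtain D where D: "(f has_derivative D) (at y)"
    using assms differentiable_def by blast
  show ?thesis
    using pd2_has_derivative[OF D] unfolding pd2_def by (simp add: vector_derivative_at)
qed

lemma dir_deriv_has_vector_derivative:
  assumes "f differentiable (at (x0 + t *\<^sub>R e))"
  shows "((\<lambda>s. f (x0 + s *\<^sub>R e)) has_vector_derivative dir_deriv f e (x0 + t *\<^sub>R e)) (at t)"
proof -
  obtain D where D: "(f has_derivative D) (at (x0 + t *\<^sub>R e))"
    using assms differentiable_def by blast
  have l: "linear D" using D has_derivative_linear by blast
  have e: "e = fst e *\<^sub>R (1, 0) + snd e *\<^sub>R (0, 1)" by (simp add: prod_eq_iff)
  have "D (fst e *\<^sub>R (1, 0) + snd e *\<^sub>R (0, 1)) = fst e *\<^sub>R D (1, 0) + snd e *\<^sub>R D (0, 1)"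
    by (simp only: linear_add[OF l] linear_scale[OF l])
  then have "D e = fst e *\<^sub>R D (1, 0) + snd e *\<^sub>R D (0, 1)" using e by metis
  also have "\<dots> = dir_deriv f e (x0 + t *\<^sub>R e)"
    using pd1_has_derivative[OF D] pd2_has_derivative[OF D]
    by (simp add: dir_deriv_def pd1_def pd2_def vector_derivative_at scaleR_conv_of_real)
  finally show ?thesis
    using has_vector_derivative_along_line[OF D] by simp
qed

lemma pd1_cong:
  assumes "open S" "x \<in> S" "\<And>y. y \<in> S \<Longrightarrow> f y = g y"
  shows "pd1 f x = pd1 g x"
proof -
  have "open ((\<lambda>t. (t, snd x)) -` S)" "fst x \<in> (\<lambda>t. (t, snd x)) -` S"
    using assms(1,2) by (auto intro!: open_vimage continuous_intros)
  then have "eventually (\<lambda>t. t \<in> UNIV \<longrightarrow> f (t, snd x) = g (t, snd x)) (nhds (fst x))"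
    unfolding eventually_nhds using assms(3) by blast
  then show ?thesis
    unfolding pd1_def by (intro vector_derivative_cong_eq) auto
qed

lemma pd2_cong:
  assumes "open S" "x \<in> S" "\<And>y. y \<in> S \<Longrightarrow> f y = g y"
  shows "pd2 f x = pd2 g x"
proof -
  have "open ((\<lambda>t. (fst x, t)) -` S)" "snd x \<in> (\<lambda>t. (fst x, t)) -` S"
    using assms(1,2) by (auto intro!: open_vimage continuous_intros)
  then have "eventually (\<lambda>t. t \<in> UNIV \<longrightarrow> f (fst x, t) = g (fst x, t)) (nhds (snd x))"
    unfolding eventually_nhds using assms(3) by blast
  then show ?thesis
    unfolding pd2_def by (intro vector_derivative_cong_eq) auto
qed

lemma pd1_add:
  assumes "f differentiable (at y)" "g differentiable (at y)"
  shows "pd1 (\<lambda>x. f x + g x) y = pd1 f y + pd1 g y"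
  unfolding pd1_def[of "\<lambda>x. f x + g x"]
  by (intro vector_derivative_at has_vector_derivative_add pd1_has_vector_derivative assms)

lemma pd2_add:
  assumes "f differentiable (at y)" "g differentiable (at y)"
  shows "pd2 (\<lambda>x. f x + g x) y = pd2 f y + pd2 g y"
  unfolding pd2_def[of "\<lambda>x. f x + g x"]
  by (intro vector_derivative_at has_vector_derivative_add pd2_has_vector_derivative assms)

lemma pd1_cmult:
  assumes "f differentiable (at y)"
  shows "pd1 (\<lambda>x. c * f x) y = c * pd1 f y"
  unfolding pd1_def[of "\<lambda>x. c * f x"]
  by (intro vector_derivative_at has_vector_derivative_mult_right pd1_has_vector_derivative assms)

lemma pd2_cmult:
  assumes "f differentiable (at y)"
  shows "pd2 (\<lambda>x. c * f x) y = c * pd2 f y"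
  unfolding pd2_def[of "\<lambda>x. c * f x"]
  by (intro vector_derivative_at has_vector_derivative_mult_right pd2_has_vector_derivative assms)

lemma pd2_pd1_eq_pd1_pd2:
  assumes "open S" "x \<in> S"
    and "\<And>y. y \<in> S \<Longrightarrow> G differentiable (at y)"
    and "\<And>y. y \<in> S \<Longrightarrow> pd2 G differentiable (at y)"
    and "continuous_on S (pd1 (pd2 G))"
  shows "pd2 (pd1 G) x = pd1 (pd2 G) x"
proof -
  obtain a b where x: "x = (a, b)" by (cases x)
  with assms(2) have ab: "(a, b) \<in> S" by simp
  have "((\<lambda>t. pd1 G (a, t)) has_vector_derivative pd1 (pd2 G) (a, b)) (at b)"
  proof (rule mixed_partials_commute[OF assms(1) ab])
    fix y assume "y \<in> S"
    show "((\<lambda>s. G (s, snd y)) has_vector_derivative pd1 G y) (at (fst y))"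
      by (rule pd1_has_vector_derivative[OF assms(3)[OF \<open>y \<in> S\<close>]])
    show "((\<lambda>t. G (fst y, t)) has_vector_derivative pd2 G y) (at (snd y))"
      by (rule pd2_has_vector_derivative[OF assms(3)[OF \<open>y \<in> S\<close>]])
    show "((\<lambda>s. pd2 G (s, snd y)) has_vector_derivative pd1 (pd2 G) y) (at (fst y))"
      by (rule pd1_has_vector_derivative[OF assms(4)[OF \<open>y \<in> S\<close>]])
  next
    show "isCont (pd1 (pd2 G)) (a, b)"
      using continuous_on_eq_continuous_at[OF assms(1)] assms(5) ab by blast
  qed
  then show ?thesis
    unfolding x pd2_def[of "pd1 G"] by (simp add: vector_derivative_at)
qed

lemma pd2_pdm:
  assumes "open S" "smooth_on S u" "y \<in> S"
  shows "pd2 (pdm i j u) y = pdm i (Suc j) u y"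
  using assms(3)
proof (induction i arbitrary: j y)
  case 0
  then show ?case by (simp add: pdm_def)
next
  case (Suc i)
  have diff: "pdm i j u differentiable (at y)" if "y \<in> S" for i j y
    using assms(1,2) that by (simp add: smooth_on_def differentiable_on_eq_differentiable_at)
  have "pd2 (pd1 (pdm i j u)) y = pd1 (pd2 (pdm i j u)) y"
  proof (rule pd2_pd1_eq_pd1_pd2[OF assms(1) Suc.prems])
    show "pd2 (pdm i j u) differentiable (at z)" if z: "z \<in> S" for z
    proof -
      obtain D where "(pdm i (Suc j) u has_derivative D) (at z)"
        using diff[OF z] differentiable_def by blast
      then have "(pd2 (pdm i j u) has_derivative D) (at z)"
        by (rule has_derivative_transform_within_open[OF _ assms(1) z]) (simp add: Suc.IH)
      then show ?thesis by (rule differentiableI)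
    qed
    have "continuous_on S (pdm (Suc i) (Suc j) u)"
      using assms(2) differentiable_imp_continuous_on by (auto simp: smooth_on_def)
    moreover have "pd1 (pd2 (pdm i j u)) z = pdm (Suc i) (Suc j) u z" if "z \<in> S" for z
      using pd1_cong[OF assms(1) that Suc.IH] by (simp add: pdm_def)
    ultimately show "continuous_on S (pd1 (pd2 (pdm i j u)))"
      using continuous_on_cong by blast
  qed (use diff in auto)
  also have "\<dots> = pd1 (pdm i (Suc j) u) y"
    using pd1_cong[OF assms(1) Suc.prems Suc.IH] .
  finally show ?case by (simp add: pdm_def)
qed

section \<open>Families closed under partial differentiation\<close>

definition pd_tower :: "(real \<times> real) set \<Rightarrow> (nat \<Rightarrow> nat \<Rightarrow> real \<times> real \<Rightarrow> complex) \<Rightarrow> bool" where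
  "pd_tower S F \<longleftrightarrow> (\<forall>i j. \<forall>y\<in>S. F i j differentiable (at y) \<and>
     pd1 (F i j) y = F (Suc i) j y \<and> pd2 (F i j) y = F i (Suc j) y)"

lemma pd_tower_pdm:
  assumes "open S" "smooth_on S u"
  shows "pd_tower S (\<lambda>i j. pdm i j u)"
  unfolding pd_tower_def
proof (intro allI ballI conjI)
  fix i j y assume y: "y \<in> S"
  show "pdm i j u differentiable (at y)"
    using assms y by (simp add: smooth_on_def differentiable_on_eq_differentiable_at)
  show "pd1 (pdm i j u) y = pdm (Suc i) j u y"
    by (simp add: pdm_def)
  show "pd2 (pdm i j u) y = pdm i (Suc j) u y"
    by (rule pd2_pdm[OF assms y])
qed

lemma pd_tower_shift1: "pd_tower S F \<Longrightarrow> pd_tower S (\<lambda>i j. F (i + p) j)"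
  by (simp add: pd_tower_def)

lemma pd_tower_shift2: "pd_tower S F \<Longrightarrow> pd_tower S (\<lambda>i j. F i (j + q))"
  by (simp add: pd_tower_def)

lemma pd_tower_add:
  assumes "pd_tower S F" "pd_tower S G"
  shows "pd_tower S (\<lambda>i j y. F i j y + G i j y)"
  using assms by (simp add: pd_tower_def pd1_add pd2_add)

lemma pd_tower_cmult:
  assumes "pd_tower S F"
  shows "pd_tower S (\<lambda>i j y. c * F i j y)"
  using assms by (simp add: pd_tower_def pd1_cmult pd2_cmult)

lemma pd_tower_vanishes:
  assumes "open S" "pd_tower S F" "\<And>y. y \<in> S \<Longrightarrow> F 0 0 y = 0" "y \<in> S"
  shows "F i j y = 0"
proof -
  have step1: "\<forall>y\<in>S. F (Suc i) j y = 0" if "\<forall>y\<in>S. F i j y = 0" for i j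
  proof
    fix y assume "y \<in> S"
    moreover have "pd1 (F i j) y = pd1 (\<lambda>_. 0) y"
      using pd1_cong[OF assms(1) \<open>y \<in> S\<close>, of "F i j"] that by simp
    ultimately have "F (Suc i) j y = pd1 (\<lambda>_. 0) y"
      using assms(2) by (simp add: pd_tower_def)
    then show "F (Suc i) j y = 0" by (simp add: pd1_def)
  qed
  have step2: "\<forall>y\<in>S. F i (Suc j) y = 0" if "\<forall>y\<in>S. F i j y = 0" for i j
  proof
    fix y assume "y \<in> S"
    moreover have "pd2 (F i j) y = pd2 (\<lambda>_. 0) y"
      using pd2_cong[OF assms(1) \<open>y \<in> S\<close>, of "F i j"] that by simp
    ultimately have "F i (Suc j) y = pd2 (\<lambda>_. 0) y"
      using assms(2) by (simp add: pd_tower_def)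
    then show "F i (Suc j) y = 0" by (simp add: pd2_def)
  qed
  have "\<forall>y\<in>S. F 0 j y = 0"
    by (induction j) (use assms(3) step2 in auto)
  then have "\<forall>y\<in>S. F i j y = 0"
    by (induction i) (use step1 in auto)
  then show ?thesis using assms(4) by blast
qed

text \<open>\<^term>\<open>dir_power p q m c\<close> is the \<open>m\<close>-th derivative in direction \<open>(p, q)\<close> of a function
  whose partial derivatives \<open>\<partial>\<^sub>1\<^sup>i \<partial>\<^sub>2\<^sup>j\<close> at a point are \<open>c i j\<close>.\<close>

fun dir_power :: "complex \<Rightarrow> complex \<Rightarrow> nat \<Rightarrow> (nat \<Rightarrow> nat \<Rightarrow> complex) \<Rightarrow> complex" where
  "dir_power p q 0 c = c 0 0"
| "dir_power p q (Suc m) c = dir_power p q m (\<lambda>i j. p * c (Suc i) j + q * c i (Suc j))"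

lemma dir_power_add: "dir_power p q m (\<lambda>i j. c i j + d i j) = dir_power p q m c + dir_power p q m d"
  by (induction m arbitrary: c d) (simp_all add: algebra_simps)

lemma dir_power_cmult: "dir_power p q m (\<lambda>i j. a * c i j) = a * dir_power p q m c"
proof (induction m arbitrary: c)
  case (Suc m)
  have "(\<lambda>i j. p * (a * c (Suc i) j) + q * (a * c i (Suc j)))
      = (\<lambda>i j. a * (p * c (Suc i) j + q * c i (Suc j)))"
    by (simp add: algebra_simps)
  then show ?case
    by (simp only: dir_power.simps Suc.IH)
qed simp

lemma dir_power_cong:
  "(\<And>i j. i + j = m \<Longrightarrow> c i j = d i j) \<Longrightarrow> dir_power p q m c = dir_power p q m d"
proof (induction m arbitrary: c d)
  case (Suc m)
  show ?case
    by (simp only: dir_power.simps) (rule Suc.IH, simp add: Suc.prems)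
qed simp

lemma dir_power_geometric: "dir_power p q m (\<lambda>i j. \<gamma> ^ j) = (p + q * \<gamma>) ^ m"
proof (induction m)
  case (Suc m)
  have "dir_power p q (Suc m) (\<lambda>i j. \<gamma> ^ j) = dir_power p q m (\<lambda>i j. (p + q * \<gamma>) * \<gamma> ^ j)"
    by (simp add: algebra_simps)
  then show ?case
    using Suc.IH by (simp add: dir_power_cmult)
qed simp

lemma continuous_on_dir_power:
  "(\<And>i j. continuous_on T (c i j)) \<Longrightarrow> continuous_on T (\<lambda>t. dir_power p q m (\<lambda>i j. c i j t))"
proof (induction m arbitrary: c)
  case (Suc m)
  show ?case
    by (simp only: dir_power.simps) (rule Suc.IH, intro continuous_intros Suc.prems)
qed simp

lemma dir_deriv_eq_0_on_segment:
  assumes "\<And>s. s \<in> {a<..<b} \<Longrightarrow> f (x0 + s *\<^sub>R e) = 0"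
    and "f differentiable (at (x0 + t *\<^sub>R e))" "t \<in> {a<..<b}"
  shows "dir_deriv f e (x0 + t *\<^sub>R e) = 0"
proof -
  have "((\<lambda>s. f (x0 + s *\<^sub>R e)) has_vector_derivative 0) (at t)"
    by (rule has_vector_derivative_transform_within_open[OF has_vector_derivative_const
          open_greaterThanLessThan assms(3)]) (use assms(1) in simp)
  then show ?thesis
    using dir_deriv_has_vector_derivative[OF assms(2)] vector_derivative_unique_at by blast
qed

lemma pd_tower_dir_power_eq_0_on_segment:
  assumes "pd_tower S F"
    and segment: "\<And>t. t \<in> {0..h} \<Longrightarrow> x0 + t *\<^sub>R e \<in> S"
    and "\<And>t. t \<in> {0<..<h} \<Longrightarrow> F 0 0 (x0 + t *\<^sub>R e) = 0" "t \<in> {0<..<h}"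
  shows "dir_power (of_real (fst e)) (of_real (snd e)) m (\<lambda>i j. F i j (x0 + t *\<^sub>R e)) = 0"
  using assms(1,3,4)
proof (induction m arbitrary: F t)
  case (Suc m)
  let ?F' = "\<lambda>i j y. of_real (fst e) * F (Suc i) j y + of_real (snd e) * F i (Suc j) y"
  have "pd_tower S ?F'"
    using Suc.prems(1) by (intro pd_tower_add pd_tower_cmult pd_tower_shift1[of S F 1, simplified]
        pd_tower_shift2[of S F 1, simplified])
  moreover have "?F' 0 0 (x0 + s *\<^sub>R e) = 0" if "s \<in> {0<..<h}" for s
  proof -
    have "x0 + s *\<^sub>R e \<in> S" using segment that by auto
    moreover have "dir_deriv (F 0 0) e (x0 + s *\<^sub>R e) = 0"
      using Suc.prems(1,2) that calculation
      by (intro dir_deriv_eq_0_on_segment[of 0 h]) (auto simp: pd_tower_def)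
    ultimately show ?thesis
      using Suc.prems(1) by (simp add: pd_tower_def dir_deriv_def)
  qed
  ultimately have "dir_power (of_real (fst e)) (of_real (snd e)) m (\<lambda>i j. ?F' i j (x0 + t *\<^sub>R e)) = 0"
    using Suc.prems(3) by (rule Suc.IH)
  then show ?case by simp
qed simp

lemma pd_tower_dir_power_eq_0:
  assumes tower: "pd_tower S F" and "h > 0"
    and segment: "\<And>t. t \<in> {0..h} \<Longrightarrow> x0 + t *\<^sub>R e \<in> S"
    and vanish: "\<And>t. t \<in> {0<..<h} \<Longrightarrow> F 0 0 (x0 + t *\<^sub>R e) = 0"
  shows "dir_power (of_real (fst e)) (of_real (snd e)) m (\<lambda>i j. F i j x0) = 0"
proof -
  let ?D = "\<lambda>t. dir_power (of_real (fst e)) (of_real (snd e)) m (\<lambda>i j. F i j (x0 + t *\<^sub>R e))"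
  have "continuous_on {0..h} ?D"
  proof (rule continuous_on_dir_power)
    fix i j
    have "continuous_on {0..h} (\<lambda>t. x0 + t *\<^sub>R e)" by (intro continuous_intros)
    moreover have "continuous_on ((\<lambda>t. x0 + t *\<^sub>R e) ` {0..h}) (F i j)"
      using tower segment
      by (auto simp: pd_tower_def intro!: continuous_at_imp_continuous_on differentiable_imp_continuous_within)
    ultimately have "continuous_on {0..h} (F i j \<circ> (\<lambda>t. x0 + t *\<^sub>R e))"
      by (rule continuous_on_compose)
    then show "continuous_on {0..h} (\<lambda>t. F i j (x0 + t *\<^sub>R e))"
      by (simp add: o_def)
  qed
  then have "continuous_on (closure {0<..<h}) ?D"
    using \<open>h > 0\<close> by simp
  moreover have "0 \<in> closure {0<..<h}"
    using \<open>h > 0\<close> by simp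
  ultimately have "?D 0 = 0"
    using continuous_constant_on_closure pd_tower_dir_power_eq_0_on_segment[OF tower segment vanish]
    by blast
  then show ?thesis by simp
qed

section \<open>Vanishing of the Taylor coefficients\<close>

text \<open>The Taylor coefficients at a point of \<open>\<partial>\<^sub>\<nu>u + C u\<close>, \<open>\<nu> = normalv \<phi>\<close>, in terms of
  those of \<open>u\<close>.\<close>

definition robin_coeffs :: "real \<Rightarrow> complex \<Rightarrow> (nat \<Rightarrow> nat \<Rightarrow> complex) \<Rightarrow> nat \<Rightarrow> nat \<Rightarrow> complex" where
  "robin_coeffs \<phi> C c i j = of_real (- sin \<phi>) * c (Suc i) j + of_real (cos \<phi>) * c i (Suc j) + C * c i j"

lemma lowest_homogeneous_part_harmonic:
  fixes c :: "nat \<Rightarrow> nat \<Rightarrow> complex"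
  assumes rec: "\<And>i j. c (i + 2) j + c i (j + 2) + k * c i j = 0"
    and low: "\<And>i j. i + j < N \<Longrightarrow> c i j = 0"
  obtains A B where "\<And>j. j \<le> N \<Longrightarrow> c (N - j) j = A * \<i> ^ j + B * (- \<i>) ^ j"
proof
  define A where "A = (c N 0 - \<i> * c (N - 1) 1) / 2"
  define B where "B = (c N 0 + \<i> * c (N - 1) 1) / 2"
  fix j assume "j \<le> N"
  then show "c (N - j) j = A * \<i> ^ j + B * (- \<i>) ^ j"
  proof (induction j rule: less_induct)
    case (less j)
    consider "j = 0" | "j = 1" | l where "j = l + 2" by (metis add_2_eq_Suc' not0_implies_Suc One_nat_def)
    then show ?case
    proof cases
      case 3
      have "N - j + 2 = N - l"
        using 3 less.prems by simp
      have "c (N - j + 2) l + c (N - j) j + k * c (N - j) l = 0"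
        unfolding 3 by (rule rec)
      then have "c (N - j) j = - c (N - j + 2) l - k * c (N - j) l"
        by algebra
      also have "\<dots> = - c (N - l) l"
        using low[of "N - j" l] 3 less.prems unfolding \<open>N - j + 2 = N - l\<close> by simp
      also have "\<dots> = A * \<i> ^ j + B * (- \<i>) ^ j"
        using less.IH[of l] 3 less.prems by (simp add: power_add)
      finally show ?thesis .
    qed (simp_all add: A_def B_def field_simps)
  qed
qed

lemma robin_lowest_degree:
  fixes c :: "nat \<Rightarrow> nat \<Rightarrow> complex"
  assumes low: "\<And>i j. i + j < N \<Longrightarrow> c i j = 0" and "N \<noteq> 0"
    and harmonic: "\<And>j. j \<le> N \<Longrightarrow> c (N - j) j = A * \<i> ^ j + B * (- \<i>) ^ j"
    and robin: "dir_power (of_real (cos \<phi>)) (of_real (sin \<phi>)) (N - 1) (robin_coeffs \<phi> C c) = 0"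
  shows "A * cis (N * \<phi>) = B * cis (- (N * \<phi>))"
proof -
  define K1 where "K1 = (of_real (- sin \<phi>) + \<i> * of_real (cos \<phi>)) * A"
  define K2 where "K2 = (of_real (- sin \<phi>) - \<i> * of_real (cos \<phi>)) * B"
  have "dir_power (of_real (cos \<phi>)) (of_real (sin \<phi>)) (N - 1) (robin_coeffs \<phi> C c)
      = dir_power (of_real (cos \<phi>)) (of_real (sin \<phi>)) (N - 1) (\<lambda>i j. K1 * \<i> ^ j + K2 * (- \<i>) ^ j)"
  proof (rule dir_power_cong)
    fix i j assume ij: "i + j = N - 1"
    then have idx: "N - j = Suc i" "N - Suc j = i" "Suc j \<le> N"
      using \<open>N \<noteq> 0\<close> by auto
    have "c (Suc i) j = A * \<i> ^ j + B * (- \<i>) ^ j"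
      using harmonic[of j] idx by simp
    moreover have "c i (Suc j) = A * \<i> ^ Suc j + B * (- \<i>) ^ Suc j"
      using harmonic[of "Suc j"] idx by simp
    moreover have "c i j = 0"
      using low[of i j] ij \<open>N \<noteq> 0\<close> by simp
    ultimately show "robin_coeffs \<phi> C c i j = K1 * \<i> ^ j + K2 * (- \<i>) ^ j"
      by (simp only: robin_coeffs_def) (simp add: K1_def K2_def algebra_simps)
  qed
  also have "\<dots> = K1 * cis \<phi> ^ (N - 1) + K2 * cis (- \<phi>) ^ (N - 1)"
  proof -
    have "cos \<phi> + sin \<phi> * \<i> = cis \<phi>" "cos \<phi> + sin \<phi> * - \<i> = cis (- \<phi>)"
      by (simp_all add: complex_eq_iff)
    then show ?thesis
      by (simp add: dir_power_add dir_power_cmult dir_power_geometric)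
  qed
  also have "\<dots> = \<i> * (A * cis \<phi> ^ N - B * cis (- \<phi>) ^ N)"
  proof -
    have "K1 = \<i> * cis \<phi> * A" "K2 = - \<i> * cis (- \<phi>) * B"
      by (simp_all add: K1_def K2_def complex_eq_iff)
    moreover have "z ^ N = z * z ^ (N - 1)" for z :: complex
      using \<open>N \<noteq> 0\<close> by (simp add: power_eq_if)
    ultimately show ?thesis
      by (simp add: algebra_simps)
  qed
  finally have "A * cis \<phi> ^ N = B * cis (- \<phi>) ^ N"
    using robin by simp
  then show ?thesis
    by (simp only: Complex.DeMoivre mult_minus_right)
qed

lemma cis_irrational_rotation_ne_1:
  assumes "\<alpha> \<notin> \<rat>" "N \<noteq> 0"
  shows "cis (2 * pi * (real N * \<alpha>)) \<noteq> 1"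
proof
  assume "cis (2 * pi * (real N * \<alpha>)) = 1"
  then obtain n :: int where "2 * pi * (real N * \<alpha>) = of_int (2 * n) * pi"
    by (auto simp: cis_conv_exp exp_eq_1)
  then have "\<alpha> = of_int n / real N"
    using \<open>N \<noteq> 0\<close> by (simp add: field_simps)
  then show False
    using \<open>\<alpha> \<notin> \<rat>\<close> by simp
qed

lemma robin_pair_irrational_angle:
  fixes N :: nat and \<phi>1 \<phi>2 \<alpha> :: real
  assumes "A * cis (N * \<phi>1) = B * cis (- (N * \<phi>1))" "A * cis (N * \<phi>2) = B * cis (- (N * \<phi>2))"
    and "\<phi>2 = \<phi>1 + \<alpha> * pi" "\<alpha> \<notin> \<rat>" "N \<noteq> 0"
  shows "A = 0 \<and> B = 0"
proof -
  have B: "B = A * cis (2 * x)" if "A * cis x = B * cis (- x)" for x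
  proof -
    have "B = B * cis (- x) * cis x"
      by (simp add: cis_mult)
    also have "\<dots> = A * cis (2 * x)"
      unfolding that[symmetric] by (simp add: cis_mult mult.assoc)
    finally show ?thesis .
  qed
  have "A = 0"
  proof (rule ccontr)
    assume "A \<noteq> 0"
    then have "cis (2 * (N * \<phi>2)) / cis (2 * (N * \<phi>1)) = 1"
      using B[OF assms(1)] B[OF assms(2)] by simp
    then have "cis (2 * pi * (real N * \<alpha>)) = 1"
      using assms(3) by (simp add: cis_divide algebra_simps)
    then show False
      using cis_irrational_rotation_ne_1 assms(4,5) by blast
  qed
  then show ?thesis
    using B[OF assms(1)] by simp
qed

lemma taylor_coeffs_vanish:
  fixes c :: "nat \<Rightarrow> nat \<Rightarrow> complex"
  assumes rec: "\<And>i j. c (i + 2) j + c i (j + 2) + k * c i j = 0"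
    and robin1: "\<And>m. dir_power (of_real (cos \<phi>1)) (of_real (sin \<phi>1)) m (robin_coeffs \<phi>1 C1 c) = 0"
    and robin2: "\<And>m. dir_power (of_real (cos \<phi>2)) (of_real (sin \<phi>2)) m (robin_coeffs \<phi>2 C2 c) = 0"
    and angle: "\<phi>2 = \<phi>1 + \<alpha> * pi" "\<alpha> \<notin> \<rat>"
    and "c 0 0 = 0"
  shows "c i j = 0"
proof -
  have "\<forall>i j. i + j = N \<longrightarrow> c i j = 0" for N
  proof (induction N rule: less_induct)
    case (less N)
    have low: "\<And>i j. i + j < N \<Longrightarrow> c i j = 0"
      using less by blast
    show ?case
    proof (cases "N = 0")
      case True
      then show ?thesis using \<open>c 0 0 = 0\<close> by simp
    next
      case False
      obtain A B where AB: "\<And>j. j \<le> N \<Longrightarrow> c (N - j) j = A * \<i> ^ j + B * (- \<i>) ^ j"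
        using lowest_homogeneous_part_harmonic[of c k N, OF rec low] by blast
      have "A = 0 \<and> B = 0"
        using robin_lowest_degree[of N c A B, OF low False AB robin1]
          robin_lowest_degree[of N c A B, OF low False AB robin2]
        by (rule robin_pair_irrational_angle[OF _ _ angle False])
      then show ?thesis
        using AB by (metis add_diff_cancel_right' le_add2 add.right_neutral mult_zero_left)
    qed
  qed
  then show ?thesis by blast
qed

section \<open>Vanishing order\<close>

lemma Vani_eq_0_iff: "Vani f x = 0 \<longleftrightarrow> f x \<noteq> 0"
proof -
  have "hom_term_nonzero f x 0 \<longleftrightarrow> f x \<noteq> 0"
    by (simp add: hom_term_nonzero_def pdm_def)
  then show ?thesis
    unfolding Vani_def zero_enat_def by (auto intro: Least_eq_0 dest: LeastI)
qed

lemma Vani_eq_infinity_iff: "Vani f x = \<infinity> \<longleftrightarrow> (\<forall>i j. pdm i j f x = 0)"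
proof -
  have "hom_term_nonzero f x N \<longleftrightarrow> (\<exists>j\<le>N. pdm j (N - j) f x \<noteq> 0)" for N
    by (simp add: hom_term_nonzero_def)
  then have "(\<exists>N. hom_term_nonzero f x N) \<longleftrightarrow> (\<exists>i j. pdm i j f x \<noteq> 0)"
    by (metis add_diff_cancel_left' le_add1)
  then show ?thesis
    by (simp add: Vani_def)
qed

lemma helmholtz_taylor_recurrence:
  assumes "open S" "pd_tower S F" "\<And>y. y \<in> S \<Longrightarrow> F 2 0 y + F 0 2 y + k * F 0 0 y = 0" "x \<in> S"
  shows "F (i + 2) j x + F i (j + 2) x + k * F i j x = 0"
proof -
  have "pd_tower S (\<lambda>i j y. F (i + 2) j y + F i (j + 2) y + k * F i j y)"
    using assms(2) by (intro pd_tower_add pd_tower_cmult pd_tower_shift1 pd_tower_shift2)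
  then show ?thesis
    by (rule pd_tower_vanishes[OF assms(1) _ _ assms(4)]) (use assms(3) in \<open>simp add: numeral_2_eq_2\<close>)
qed

lemma dir_power_robin_coeffs_eq_0:
  assumes tower: "pd_tower S F" and "h > 0"
    and segment: "\<And>t. t \<in> {0..h} \<Longrightarrow> segment_pt x0 \<phi> t \<in> S"
    and robin: "\<And>t. t \<in> {0..h} \<Longrightarrow>
      dir_deriv (F 0 0) (normalv \<phi>) (segment_pt x0 \<phi> t) + C * F 0 0 (segment_pt x0 \<phi> t) = 0"
  shows "dir_power (of_real (cos \<phi>)) (of_real (sin \<phi>)) m (robin_coeffs \<phi> C (\<lambda>i j. F i j x0)) = 0"
proof -
  let ?R = "\<lambda>i j y. robin_coeffs \<phi> C (\<lambda>i j. F i j y) i j"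
  have "pd_tower S ?R"
    unfolding robin_coeffs_def using tower
    by (intro pd_tower_add pd_tower_cmult pd_tower_shift1[of S F 1, simplified]
        pd_tower_shift2[of S F 1, simplified])
  moreover have "?R 0 0 (x0 + t *\<^sub>R unitv \<phi>) = 0" if "t \<in> {0<..<h}" for t
    using robin[of t] segment[of t] tower that
    by (simp add: robin_coeffs_def pd_tower_def dir_deriv_def normalv_def segment_pt_def)
  ultimately have "dir_power (of_real (fst (unitv \<phi>))) (of_real (snd (unitv \<phi>))) m (\<lambda>i j. ?R i j x0) = 0"
    using segment \<open>h > 0\<close> by (intro pd_tower_dir_power_eq_0) (auto simp: segment_pt_def)
  then show ?thesis
    by (simp add: unitv_def)
qed

theorem theorem4p3:
  fixes \<Omega> :: "(real \<times> real) set" and u :: "real \<times> real \<Rightarrow> complex"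
    and lam h \<alpha> \<theta> :: real and x0 :: "real \<times> real" and C1 :: complex
  assumes "open \<Omega>"
    and "lam > 0"
    and "real_analytic_on \<Omega> u"
    and "(\<lambda>x. (cmod (u x))\<^sup>2) integrable_on \<Omega>"
    and "\<forall>x\<in>\<Omega>. - laplacian u x = of_real lam * u x"
    and "x0 \<in> \<Omega>" and "h > 0"
    and "0 < \<alpha>" and "\<alpha> < 2" and "\<alpha> \<notin> \<rat>"
    and "\<forall>t\<in>{0..h}. segment_pt x0 \<theta> t \<in> \<Omega>"
    and "\<forall>t\<in>{0..h}. segment_pt x0 (\<theta> + \<alpha> * pi) t \<in> \<Omega>"
    and "\<forall>t\<in>{0..h}. dir_deriv u (normalv (\<theta> + \<alpha> * pi)) (segment_pt x0 (\<theta> + \<alpha> * pi) t) = 0"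
    and "C1 \<noteq> 0"
    and "\<forall>t\<in>{0..h}. dir_deriv u (normalv \<theta>) (segment_pt x0 \<theta> t)
                      + C1 * u (segment_pt x0 \<theta> t) = 0"
  shows "(u x0 \<noteq> 0 \<longrightarrow> Vani u x0 = 0) \<and> (u x0 = 0 \<longrightarrow> Vani u x0 = \<infinity>)"
proof -
  have tower: "pd_tower \<Omega> (\<lambda>i j. pdm i j u)"
    using assms(1,3) by (simp add: pd_tower_pdm real_analytic_on_def)
  have pdm_00: "pdm 0 0 u = u"
    by (simp add: pdm_def)
  define c where "c i j = pdm i j u x0" for i j
  have "c (i + 2) j + c i (j + 2) + of_real lam * c i j = 0" for i j
    unfolding c_def using assms(5)
    by (intro helmholtz_taylor_recurrence[OF assms(1) tower _ assms(6)])
       (simp add: laplacian_def pdm_def numeral_2_eq_2 add_eq_0_iff)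
  moreover have "dir_power (of_real (cos \<theta>)) (of_real (sin \<theta>)) m (robin_coeffs \<theta> C1 c) = 0" for m
    unfolding c_def using assms(11,15)
    by (intro dir_power_robin_coeffs_eq_0[OF tower \<open>h > 0\<close>]) (simp_all add: pdm_00)
  moreover have "dir_power (of_real (cos (\<theta> + \<alpha> * pi))) (of_real (sin (\<theta> + \<alpha> * pi))) m
      (robin_coeffs (\<theta> + \<alpha> * pi) 0 c) = 0" for m
    unfolding c_def using assms(12,13)
    by (intro dir_power_robin_coeffs_eq_0[OF tower \<open>h > 0\<close>]) (simp_all add: pdm_00)
  ultimately have "c 0 0 = 0 \<Longrightarrow> c i j = 0" for i j
    using taylor_coeffs_vanish[OF _ _ _ refl \<open>\<alpha> \<notin> \<rat>\<close>] by blast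
  then show ?thesis
    by (auto simp: Vani_eq_0_iff Vani_eq_infinity_iff c_def pdm_00)
qed

end
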